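(* Let $(R,+,\times)$ be a finite ring with identity $1$, of order $n$, and let $G$ be a subgroup of the multiplicative group $R^\times$ of invertible elements of $R$. Let $f_G$ be the coset index function induced by $G$. Then $f_G$ is an $(n,m,S)$ zero-difference function from $(R,+)$ to $\mathbb{Z}_m$, where $$m=\sum_{a\in d(G)}\frac{M(G,a)}{a},\qquad S=\{N(G,a)\mid a\in R\setminus\{0\}\}.$$
   Context: For a subgroup $G$ of $R^\times$ and $r\in R$, the coset $rG=\{rg\mid g\in G\}$; the sets $rG$ ($r\in R$) form a partition $D_G$ of $R$. The coset index function induced by $G$ is $f_G(x)=h_G(C_x)$, where $C_x\in D_G$ is the coset containing $x$ and $h_G:D_G\to\mathbb{Z}_{|D_G|}$ is a fixed bijection. Notation: $N(G,a)$ is the size of the union over all $g\in G$ of the solution sets $\{x\in R\mid x(g-1)=a\}$; $d(G)$ is the set of sizes $|rG|$ as $r$ runs over $R$; for a positive integer $a$, $M(G,a)$ is the number of $r\in R$ with $|rG|=a$. Definition: for finite abelian groups $A,B$, a function $f:A\to B$ is an $(n,m,S)$ zero-difference function (ZDF), where $S\subset\mathbb{N}$, if $n=|A|$, $m=|f(A)|$, and for every nonzero $a\in A$, $|\{x\in A\mid f(x+a)-f(x)=0\}|\in S$. *)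

theory Defs
  imports Complex_Main
begin

definition ring_unit :: "'a::ring_1 \<Rightarrow> bool" where
  "ring_unit u \<longleftrightarrow> (\<exists>v. u * v = 1 \<and> v * u = 1)"

definition unit_subgroup :: "'a::ring_1 set \<Rightarrow> bool" where
  "unit_subgroup G \<longleftrightarrow> G \<subseteq> {u. ring_unit u} \<and> 1 \<in> G \<and>
     (\<forall>x\<in>G. \<forall>y\<in>G. x * y \<in> G) \<and>
     (\<forall>x\<in>G. \<exists>y\<in>G. x * y = 1 \<and> y * x = 1)"

definition coset :: "'a::ring_1 \<Rightarrow> 'a set \<Rightarrow> 'a set" where
  "coset r G = (\<lambda>g. r * g) ` G"

definition cosets :: "'a::ring_1 set \<Rightarrow> 'a set set" where
  "cosets G = range (\<lambda>r. coset r G)"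

definition coset_index_fun :: "('a set \<Rightarrow> nat) \<Rightarrow> 'a::ring_1 set \<Rightarrow> 'a \<Rightarrow> nat" where
  "coset_index_fun h G x = h (coset x G)"

definition NG :: "'a::ring_1 set \<Rightarrow> 'a \<Rightarrow> nat" where
  "NG G a = card (\<Union>g\<in>G. {x. x * (g - 1) = a})"

definition dG :: "'a::ring_1 set \<Rightarrow> nat set" where
  "dG G = (\<lambda>r. card (coset r G)) ` UNIV"

definition MG :: "'a::ring_1 set \<Rightarrow> nat \<Rightarrow> nat" where
  "MG G a = card {r. card (coset r G) = a}"

(* (n,m,S) zero-difference function f : A \<rightarrow> B, A = UNIV (additive group of 'a),
   with B given as a set of values; f(x+a) - f(x) = 0 rendered as f(x+a) = f(x) *)
definition ZDF :: "('a::ab_group_add \<Rightarrow> 'b) \<Rightarrow> 'b set \<Rightarrow> nat \<Rightarrow> nat \<Rightarrow> nat set \<Rightarrow> bool" where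
  "ZDF f B n m S \<longleftrightarrow> range f \<subseteq> B \<and> n = card (UNIV :: 'a set) \<and> m = card (range f) \<and>
     (\<forall>a. a \<noteq> 0 \<longrightarrow> card {x. f (x + a) = f x} \<in> S)"

end

theory Submission
  imports Defs
begin

(* Two elements x, y lie in the same coset of G exactly when y = x g for some g in G,
   and x + a = x g means x (g - 1) = a; so the zero-difference count of f_G at a is
   N(G,a). The number m of cosets is the sum over r of 1/|rG|, since every coset C
   contributes |C| terms 1/|C|; grouping the terms by the value of |rG| gives the sum of
   M(G,a)/a over a in d(G). *)

lemma unit_subgroup_one: "unit_subgroup G \<Longrightarrow> 1 \<in> G"
  unfolding unit_subgroup_def by blast

lemma coset_mult_right:
  assumes G: "unit_subgroup G" and g: "g \<in> G"
  shows "coset (x * g) G = coset (x::'a::ring_1) G"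
proof
  have closed: "\<forall>x\<in>G. \<forall>y\<in>G. x * y \<in> G"
    using G unfolding unit_subgroup_def by blast
  obtain g' where g': "g' \<in> G" "g * g' = 1"
    using G g unfolding unit_subgroup_def by blast
  show "coset (x * g) G \<subseteq> coset x G"
    unfolding coset_def using closed g by (auto simp: mult.assoc)
  show "coset x G \<subseteq> coset (x * g) G"
  proof
    fix y assume "y \<in> coset x G"
    then obtain k where k: "k \<in> G" "y = x * k" unfolding coset_def by auto
    then have "y = x * g * (g' * k)" using g' by (metis mult.assoc mult_1_left)
    moreover have "g' * k \<in> G" using closed g' k by blast
    ultimately show "y \<in> coset (x * g) G" unfolding coset_def by blast
  qed
qed

lemma coset_eq_iff:
  assumes "unit_subgroup G"
  shows "coset y G = coset x G \<longleftrightarrow> y \<in> coset (x::'a::ring_1) G"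
proof
  show "coset y G = coset x G \<Longrightarrow> y \<in> coset x G"
    using unit_subgroup_one[OF assms] unfolding coset_def by (metis image_eqI mult_1_right)
next
  assume "y \<in> coset x G"
  then obtain g where "g \<in> G" "y = x * g" unfolding coset_def by blast
  then show "coset y G = coset x G" using coset_mult_right[OF assms] by simp
qed

lemma coset_add_eq_iff:
  assumes "unit_subgroup G"
  shows "coset (x + a) G = coset x G \<longleftrightarrow> (\<exists>g\<in>G. x * (g - 1) = (a::'a::ring_1))"
proof -
  have translate: "x + a = x * g \<longleftrightarrow> x * (g - 1) = a" for g
    by (auto simp: algebra_simps)
  have "coset (x + a) G = coset x G \<longleftrightarrow> (\<exists>g\<in>G. x + a = x * g)"
    unfolding coset_eq_iff[OF assms] by (simp add: coset_def image_iff)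
  then show ?thesis by (simp only: translate)
qed

lemma coset_index_fun_eq_iff:
  assumes "inj_on h (cosets G)"
  shows "coset_index_fun h G y = coset_index_fun h G x \<longleftrightarrow> coset y G = coset x G"
  using assms unfolding coset_index_fun_def cosets_def by (auto dest: inj_onD)

lemma card_zero_difference_coset_index_fun:
  assumes "unit_subgroup G" and "inj_on h (cosets G)"
  shows "card {x. coset_index_fun h G (x + a) = coset_index_fun h G x} = NG G a"
proof -
  have "{x. coset_index_fun h G (x + a) = coset_index_fun h G x} = (\<Union>g\<in>G. {x. x * (g - 1) = a})"
    by (auto simp: coset_index_fun_eq_iff[OF assms(2)] coset_add_eq_iff[OF assms(1)])
  then show ?thesis unfolding NG_def by simp
qed

lemma range_coset_index_fun:
  assumes "bij_betw h (cosets G) {0..<card (cosets G)}"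
  shows "range (coset_index_fun h G) = {0..<card (cosets G)}"
proof -
  have "range (coset_index_fun h G) = h ` cosets G"
    unfolding coset_index_fun_def cosets_def by auto
  then show ?thesis using assms unfolding bij_betw_def by simp
qed

lemma sum_inverse_eq_sum_card_fibres:
  fixes f :: "'a::finite \<Rightarrow> nat"
  shows "(\<Sum>r\<in>UNIV. 1 / real (f r)) = (\<Sum>a\<in>range f. real (card {r. f r = a}) / real a)"
proof -
  have "(\<Sum>r\<in>UNIV. 1 / real (f r)) = (\<Sum>a\<in>range f. \<Sum>r\<in>{r\<in>UNIV. f r = a}. 1 / real (f r))"
    by (rule sum.group[symmetric]) auto
  also have "\<dots> = (\<Sum>a\<in>range f. real (card {r. f r = a}) / real a)"
    by (rule sum.cong) auto
  finally show ?thesis .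
qed

lemma sum_inverse_card_classes:
  fixes F :: "'a::finite \<Rightarrow> 'a set"
  assumes same_class: "\<And>x y. F y = F x \<longleftrightarrow> y \<in> F x"
  shows "(\<Sum>r\<in>UNIV. 1 / real (card (F r))) = real (card (range F))"
proof -
  have "(\<Sum>r\<in>UNIV. 1 / real (card (F r))) = (\<Sum>C\<in>range F. \<Sum>r\<in>{r\<in>UNIV. F r = C}. 1 / real (card (F r)))"
    by (rule sum.group[symmetric]) auto
  also have "\<dots> = (\<Sum>C\<in>range F. 1)"
  proof (rule sum.cong)
    fix C assume "C \<in> range F"
    then obtain x where x: "C = F x" by blast
    then have fibre: "{r\<in>UNIV. F r = C} = C" using same_class by blast
    have "(\<Sum>r\<in>{r\<in>UNIV. F r = C}. 1 / real (card (F r))) = (\<Sum>r\<in>C. 1 / real (card C))"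
      by (rule sum.cong) (use fibre in auto)
    also have "\<dots> = 1"
      using same_class x by (cases "C = {}") auto
    finally show "(\<Sum>r\<in>{r\<in>UNIV. F r = C}. 1 / real (card (F r))) = 1" .
  qed simp
  finally show ?thesis by simp
qed

theorem theorem2p3:
  fixes G :: "'a::{ring_1, finite} set" and h :: "'a set \<Rightarrow> nat"
  assumes "unit_subgroup G"
    and "bij_betw h (cosets G) {0..<card (cosets G)}"
  shows "\<exists>m::nat. real m = (\<Sum>a\<in>dG G. real (MG G a) / real a) \<and>
           ZDF (coset_index_fun h G) {0..<m} (card (UNIV :: 'a set)) m {NG G a | a. a \<noteq> 0}"
proof (intro exI conjI)
  let ?m = "card (cosets G)"
  have "(\<Sum>a\<in>dG G. real (MG G a) / real a) = (\<Sum>r\<in>UNIV. 1 / real (card (coset r G)))"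
    unfolding dG_def MG_def by (rule sum_inverse_eq_sum_card_fibres[symmetric])
  also have "\<dots> = real ?m"
    unfolding cosets_def using coset_eq_iff[OF assms(1)] by (rule sum_inverse_card_classes)
  finally show "real ?m = (\<Sum>a\<in>dG G. real (MG G a) / real a)" ..
  have "inj_on h (cosets G)" using assms(2) by (rule bij_betw_imp_inj_on)
  then show "ZDF (coset_index_fun h G) {0..<?m} (card (UNIV :: 'a set)) ?m {NG G a | a. a \<noteq> 0}"
    unfolding ZDF_def range_coset_index_fun[OF assms(2)]
    using card_zero_difference_coset_index_fun[OF assms(1)] by auto
qed

end
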